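(* Let $m,n\ge1$ be integers, $A=(a_{ij})$ an $n\times m$ real matrix and $q_{\max}>1$. The ILLL-algorithm on input $A,q_{\max}$ finds a sequence of $m$-tuples of integers $q_1,\dots,q_m$ such that for every real $Q$ with $2^{\frac{(m+n+3)(m+n)}{4m}}\le Q\le q_{\max}$ one of these $m$-tuples satisfies $$\max_j|q_j|\le Q\quad\text{and}\quad \max_i\|q_1a_{i1}+\dots+q_ma_{im}\|\le 2^{\frac{(m+n+3)(m+n)}{4n}}Q^{-\frac{m}{n}}.$$
   Context: $\|x\|$ denotes the distance from $x\in\mathbb R$ to the nearest integer. A basis $b_1,\dots,b_r$ of $\mathbb R^r$ with Gram–Schmidt vectors $b_i^*=b_i-\sum_{j<i}\mu_{ij}b_j^*$, $\mu_{ij}=(b_i,b_j^* )/(b_j^*,b_j^* )$, is reduced if $|\mu_{ij}|\le\frac12$ ($j<i$) and $|b_i^*+\mu_{i,i-1}b_{i-1}^*|^2\ge\frac34|b_{i-1}^*|^2$ ($1<i\le r$); the LLL-algorithm returns a reduced basis of the lattice generated by its input basis. The ILLL-algorithm: put $k'=\left\lceil -\frac{(m+n-1)(m+n)}{4n}+\frac{m\log_2 q_{\max}}{n}\right\rceil$ and, for $k\ge1$, $c(k)=\left(2^{-\frac{m+n+3}{4}-k+1}\right)^{\frac{m+n}{m}}$. Start with the basis given by the columns of $B=\begin{pmatrix} I_n & A\\ 0& c(1)I_m\end{pmatrix}$. In iteration $k=1,\dots,k'$: apply the LLL-algorithm to the current basis; from the first vector of the reduced basis, which has the form $(q_1a_{11}+\dots+q_ma_{1m}-p_1,\dots,q_1a_{n1}+\dots+q_ma_{nm}-p_n,c(k)q_1,\dots,c(k)q_m)^T$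 with $p_i,q_j\in\mathbb Z$, output the $m$-tuple $q(k)=(q_1,\dots,q_m)$; then divide the last $m$ coordinates of all basis vectors by $2^{\frac{m+n}{m}}$. The sequence found by the algorithm is $q(1),\dots,q(k')$. *)

theory Defs
  imports Complex_Main
begin

text \<open>Vectors of R^r are represented as functions nat => real, only coordinates k < r matter.
A family of r vectors (a basis) is b :: nat => nat => real, b i is the i-th vector (i < r),
b i k its k-th coordinate. Indices are 0-based.\<close>

definition ip :: "nat \<Rightarrow> (nat \<Rightarrow> real) \<Rightarrow> (nat \<Rightarrow> real) \<Rightarrow> real" where
  "ip r x y = (\<Sum>k<r. x k * y k)"

function gs :: "nat \<Rightarrow> (nat \<Rightarrow> nat \<Rightarrow> real) \<Rightarrow> nat \<Rightarrow> nat \<Rightarrow> real" where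
  "gs r b i = (\<lambda>k. b i k -
     (\<Sum>j\<in>{..<i}. (ip r (b i) (gs r b j) / ip r (gs r b j) (gs r b j)) * gs r b j k))"
  by auto
termination by (relation "measure (\<lambda>(r, b, i). i)") auto

definition gs_mu :: "nat \<Rightarrow> (nat \<Rightarrow> nat \<Rightarrow> real) \<Rightarrow> nat \<Rightarrow> nat \<Rightarrow> real" where
  "gs_mu r b i j = ip r (b i) (gs r b j) / ip r (gs r b j) (gs r b j)"

definition reduced :: "nat \<Rightarrow> (nat \<Rightarrow> nat \<Rightarrow> real) \<Rightarrow> bool" where
  "reduced r b \<longleftrightarrow>
     (\<forall>i<r. \<forall>j<i. \<bar>gs_mu r b i j\<bar> \<le> 1/2) \<and>
     (\<forall>i. 1 \<le> i \<and> i < r \<longrightarrow>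
        ip r (\<lambda>k. gs r b i k + gs_mu r b i (i-1) * gs r b (i-1) k)
             (\<lambda>k. gs r b i k + gs_mu r b i (i-1) * gs r b (i-1) k)
        \<ge> 3/4 * ip r (gs r b (i-1)) (gs r b (i-1)))"

definition in_lattice :: "nat \<Rightarrow> (nat \<Rightarrow> nat \<Rightarrow> real) \<Rightarrow> (nat \<Rightarrow> real) \<Rightarrow> bool" where
  "in_lattice r b v \<longleftrightarrow> (\<exists>c::nat \<Rightarrow> int. \<forall>k<r. v k = (\<Sum>i<r. of_int (c i) * b i k))"

definition same_lattice :: "nat \<Rightarrow> (nat \<Rightarrow> nat \<Rightarrow> real) \<Rightarrow> (nat \<Rightarrow> nat \<Rightarrow> real) \<Rightarrow> bool" where
  "same_lattice r b b' \<longleftrightarrow> (\<forall>i<r. in_lattice r b (b' i)) \<and> (\<forall>i<r. in_lattice r b' (b i))"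

text \<open>The specification of the LLL-algorithm: its output b' is a reduced basis of the
lattice generated by its input b.\<close>
definition LLL_output :: "nat \<Rightarrow> (nat \<Rightarrow> nat \<Rightarrow> real) \<Rightarrow> (nat \<Rightarrow> nat \<Rightarrow> real) \<Rightarrow> bool" where
  "LLL_output r b b' \<longleftrightarrow> reduced r b' \<and> same_lattice r b b'"

definition dist_int :: "real \<Rightarrow> real" where
  "dist_int x = min (x - of_int \<lfloor>x\<rfloor>) (of_int \<lceil>x\<rceil> - x)"

definition ILLL_c :: "nat \<Rightarrow> nat \<Rightarrow> nat \<Rightarrow> real" where
  "ILLL_c m n k = (2 powr (- (real m + real n + 3) / 4 - real k + 1)) powr ((real m + real n) / real m)"

definition ILLL_kmax :: "nat \<Rightarrow> nat \<Rightarrow> real \<Rightarrow> int" where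
  "ILLL_kmax m n qmax = \<lceil>- ((real m + real n - 1) * (real m + real n)) / (4 * real n)
                          + real m * log 2 qmax / real n\<rceil>"

text \<open>Initial basis: columns of [[I_n, A],[0, c(1) I_m]]; A i j is a_{ij} (i < n, j < m).\<close>
definition ILLL_B0 :: "nat \<Rightarrow> nat \<Rightarrow> (nat \<Rightarrow> nat \<Rightarrow> real) \<Rightarrow> nat \<Rightarrow> nat \<Rightarrow> real" where
  "ILLL_B0 m n A i k =
     (if i < n then (if k = i then 1 else 0)
      else if k < n then A k (i - n)
      else if k = i then ILLL_c m n 1 else 0)"

text \<open>A run of the ILLL-algorithm: C k is the basis before the LLL call in iteration k,
R k the reduced basis returned, q k the output m-tuple (with p k the corresponding p's).\<close>
definition ILLL_run :: "nat \<Rightarrow> nat \<Rightarrow> (nat \<Rightarrow> nat \<Rightarrow> real) \<Rightarrow> real \<Rightarrow>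
    (nat \<Rightarrow> nat \<Rightarrow> nat \<Rightarrow> real) \<Rightarrow> (nat \<Rightarrow> nat \<Rightarrow> nat \<Rightarrow> real) \<Rightarrow>
    (nat \<Rightarrow> nat \<Rightarrow> int) \<Rightarrow> (nat \<Rightarrow> nat \<Rightarrow> int) \<Rightarrow> bool" where
  "ILLL_run m n A qmax C R q p \<longleftrightarrow>
     (let r = m + n; K = ILLL_kmax m n qmax in
      (\<forall>i<r. \<forall>k<r. C 1 i k = ILLL_B0 m n A i k) \<and>
      (\<forall>k::nat. 1 \<le> k \<and> int k \<le> K \<longrightarrow>
          LLL_output r (C k) (R k) \<and>
          (\<forall>i<n. R k 0 i = (\<Sum>j<m. of_int (q k j) * A i j) - of_int (p k i)) \<and>
          (\<forall>j<m. R k 0 (n + j) = ILLL_c m n k * of_int (q k j)) \<and>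
          (\<forall>i<r. \<forall>l<r. C (k + 1) i l =
              (if l < n then R k i l else R k i l / 2 powr ((real m + real n) / real m)))))"

end

theory Submission
  imports Defs "Jordan_Normal_Form.Determinant"
begin

text \<open>LLL only changes the basis of the lattice, and each rescaling multiplies the determinant
  by 2 powr (-(m + n)), so the lattice of iteration k has determinant at most c(k)^m. The first
  vector v of an LLL-reduced basis of an r-dimensional lattice satisfies
  |v|^2 \<le> 2 powr ((r - 1) / 2) * |det|^(2/r), which here gives |v| \<le> 2 powr (- k); this bounds
  both c(k) |q_j| and the distances to the nearest integers. It remains to pick k as the integer
  part of the solution of 2 powr (- k) = c(k) * Q.\<close>

declare gs.simps[simp del]

lemma gs_eq: "gs r b i k = b i k - (\<Sum>j<i. gs_mu r b i j * gs r b j k)"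
  by (subst gs.simps) (simp add: gs_mu_def)

lemma gs_0: "gs r b 0 = b 0"
  by (rule ext) (simp add: gs_eq[of r b 0])

lemma ip_sym: "ip r x y = ip r y x"
  unfolding ip_def by (simp add: mult.commute)

lemma ip_nonneg: "0 \<le> ip r x x"
  unfolding ip_def by (auto intro: sum_nonneg)

lemma ip_add_scaled_self:
  "ip r (\<lambda>k. x k + c * y k) (\<lambda>k. x k + c * y k) = ip r x x + 2 * c * ip r x y + c\<^sup>2 * ip r y y"
  unfolding ip_def by (simp add: algebra_simps power2_eq_square sum.distrib sum_distrib_left)

lemma sq_le_ip_self: "l < r \<Longrightarrow> (x l)\<^sup>2 \<le> ip r x x"
  unfolding ip_def power2_eq_square by (rule member_le_sum) auto

lemma ip_self_eq_0D: "ip r x x = 0 \<Longrightarrow> k < r \<Longrightarrow> x k = 0"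
  unfolding ip_def by (subst (asm) sum_nonneg_eq_0_iff) auto

lemma ip_eq_0_right:
  assumes "ip r x x = 0"
  shows "ip r y x = 0"
  unfolding ip_def using ip_self_eq_0D[OF assms] by (intro sum.neutral) auto

lemma ip_gs_left:
  "ip r (gs r b i) y = ip r (b i) y - (\<Sum>l<i. gs_mu r b i l * ip r (gs r b l) y)"
proof -
  have "ip r (gs r b i) y = (\<Sum>k<r. b i k * y k) - (\<Sum>k<r. \<Sum>j<i. gs_mu r b i j * (gs r b j k * y k))"
    unfolding ip_def gs_eq[of r b i]
    by (simp add: left_diff_distrib sum_subtractf sum_distrib_right mult.assoc)
  then show ?thesis
    unfolding ip_def by (subst (asm) sum.swap) (simp add: sum_distrib_left)
qed

lemma gs_orthogonal: "j < i \<Longrightarrow> ip r (gs r b i) (gs r b j) = 0"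
proof (induction i arbitrary: j rule: less_induct)
  case (less i)
  show ?case
  proof (cases "ip r (gs r b j) (gs r b j) = 0")
    case True
    then show ?thesis by (rule ip_eq_0_right)
  next
    case False
    have "ip r (gs r b l) (gs r b j) = 0" if "l < i" "l \<noteq> j" for l
      using less.IH[of l j] less.IH[of j l] less.prems that by (cases "j < l") (auto simp: ip_sym)
    then have "(\<Sum>l<i. gs_mu r b i l * ip r (gs r b l) (gs r b j))
        = gs_mu r b i j * ip r (gs r b j) (gs r b j)"
      using less.prems by (subst sum.remove[of _ j]) (auto intro!: sum.neutral)
    also have "\<dots> = ip r (b i) (gs r b j)"
      using False by (simp add: gs_mu_def)
    finally show ?thesis by (simp add: ip_gs_left[of r b i])
  qed
qed

lemma reduced_gs_sq_norm_le:
  assumes "reduced r b" "1 \<le> i" "i < r"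
  shows "ip r (gs r b (i-1)) (gs r b (i-1)) \<le> 2 * ip r (gs r b i) (gs r b i)"
proof -
  let ?g = "gs r b i" and ?h = "gs r b (i-1)" and ?\<mu> = "gs_mu r b i (i-1)"
  have "\<bar>?\<mu>\<bar> \<le> 1/2"
    using assms unfolding reduced_def by simp
  then have "?\<mu>\<^sup>2 \<le> (1/2)\<^sup>2"
    by (metis abs_ge_zero power2_abs power_mono)
  then have \<mu>: "?\<mu>\<^sup>2 * ip r ?h ?h \<le> 1/4 * ip r ?h ?h"
    using ip_nonneg by (intro mult_right_mono) (auto simp: power2_eq_square)
  have "3/4 * ip r ?h ?h \<le> ip r (\<lambda>k. ?g k + ?\<mu> * ?h k) (\<lambda>k. ?g k + ?\<mu> * ?h k)"
    using assms unfolding reduced_def by blast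
  also have "\<dots> = ip r ?g ?g + ?\<mu>\<^sup>2 * ip r ?h ?h"
    using gs_orthogonal[of "i-1" i r b] assms(2) by (simp add: ip_add_scaled_self)
  finally show ?thesis using \<mu> by linarith
qed

lemma reduced_first_sq_norm_le:
  "reduced r b \<Longrightarrow> i < r \<Longrightarrow> ip r (b 0) (b 0) \<le> 2^i * ip r (gs r b i) (gs r b i)"
proof (induction i)
  case 0
  then show ?case by (simp add: gs_0)
next
  case (Suc i)
  then have "ip r (b 0) (b 0) \<le> 2^i * ip r (gs r b i) (gs r b i)"
    by simp
  also have "\<dots> \<le> 2^i * (2 * ip r (gs r b (Suc i)) (gs r b (Suc i)))"
    using reduced_gs_sq_norm_le[of r b "Suc i"] Suc.prems by (intro mult_left_mono) auto
  finally show ?case by simp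
qed

lemma reduced_first_sq_norm_pow_le:
  assumes "reduced r b"
  shows "(ip r (b 0) (b 0))^r \<le> 2^(\<Sum>i<r. i) * (\<Prod>i<r. ip r (gs r b i) (gs r b i))"
proof -
  have "(ip r (b 0) (b 0))^r = (\<Prod>i<r. ip r (b 0) (b 0))"
    by simp
  also have "\<dots> \<le> (\<Prod>i<r. 2^i * ip r (gs r b i) (gs r b i))"
    using reduced_first_sq_norm_le[OF assms] ip_nonneg by (intro prod_mono) auto
  also have "\<dots> = 2^(\<Sum>i<r. i) * (\<Prod>i<r. ip r (gs r b i) (gs r b i))"
    by (simp add: prod.distrib power_sum)
  finally show ?thesis .
qed

definition basis_mat :: "nat \<Rightarrow> (nat \<Rightarrow> nat \<Rightarrow> real) \<Rightarrow> real mat" where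
  "basis_mat r b = mat r r (\<lambda>(i, l). b i l)"

lemma basis_mat_carrier [simp]: "basis_mat r b \<in> carrier_mat r r"
  unfolding basis_mat_def by simp

lemma basis_mat_cong: "(\<And>i k. i < r \<Longrightarrow> k < r \<Longrightarrow> b i k = b' i k) \<Longrightarrow> basis_mat r b = basis_mat r b'"
  by (auto simp: basis_mat_def intro!: eq_matI)

definition gs_coeff_mat :: "nat \<Rightarrow> (nat \<Rightarrow> nat \<Rightarrow> real) \<Rightarrow> real mat" where
  "gs_coeff_mat r b = mat r r (\<lambda>(i, j). if j < i then gs_mu r b i j else if i = j then 1 else 0)"

lemma gs_coeff_mat_carrier [simp]: "gs_coeff_mat r b \<in> carrier_mat r r"
  unfolding gs_coeff_mat_def by simp

lemma det_gs_coeff_mat: "det (gs_coeff_mat r b) = 1"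
proof -
  have "det (gs_coeff_mat r b) = prod_list (diag_mat (gs_coeff_mat r b))"
    by (rule det_lower_triangular[of r]) (auto simp: gs_coeff_mat_def)
  then show ?thesis
    by (simp add: prod_list_diag_prod gs_coeff_mat_def)
qed

lemma basis_mat_gs_decomp: "basis_mat r b = gs_coeff_mat r b * basis_mat r (gs r b)"
proof (rule eq_matI)
  fix i l
  assume "i < dim_row (gs_coeff_mat r b * basis_mat r (gs r b))"
    and "l < dim_col (gs_coeff_mat r b * basis_mat r (gs r b))"
  then have i: "i < r" and l: "l < r"
    by (auto simp: gs_coeff_mat_def basis_mat_def)
  have "(gs_coeff_mat r b * basis_mat r (gs r b)) $$ (i, l)
      = (\<Sum>j\<in>{0..<r}. (if j < i then gs_mu r b i j * gs r b j l else 0) + (if j = i then gs r b i l else 0))"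
    using i l by (auto simp: gs_coeff_mat_def basis_mat_def scalar_prod_def intro!: sum.cong)
  also have "\<dots> = (\<Sum>j<i. gs_mu r b i j * gs r b j l) + gs r b i l"
    using i by (simp add: sum.distrib sum.If_cases lessThan_atLeast0) (intro sum.cong; auto)
  also have "\<dots> = basis_mat r b $$ (i, l)"
    using i l by (simp add: basis_mat_def gs_eq[of r b i l])
  finally show "basis_mat r b $$ (i, l) = (gs_coeff_mat r b * basis_mat r (gs r b)) $$ (i, l)" ..
qed (auto simp: basis_mat_def gs_coeff_mat_def)

text \<open>The Gram--Schmidt change of basis is unitriangular, and the Gram matrix of the
  Gram--Schmidt vectors is diagonal by orthogonality.\<close>
lemma det_basis_mat_sq: "(det (basis_mat r b))\<^sup>2 = (\<Prod>i<r. ip r (gs r b i) (gs r b i))"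
proof -
  let ?G = "basis_mat r (gs r b)"
  have G: "?G \<in> carrier_mat r r"
    by simp
  then have GG: "?G * transpose_mat ?G \<in> carrier_mat r r"
    by (metis mult_carrier_mat transpose_carrier_mat)
  have entry: "(?G * transpose_mat ?G) $$ (i, j) = ip r (gs r b i) (gs r b j)" if "i < r" "j < r" for i j
    using that by (simp add: basis_mat_def scalar_prod_def ip_def lessThan_atLeast0)
  have "det (basis_mat r b) = det ?G"
    by (subst basis_mat_gs_decomp) (simp add: det_mult[OF gs_coeff_mat_carrier G] det_gs_coeff_mat)
  then have "(det (basis_mat r b))\<^sup>2 = det (?G * transpose_mat ?G)"
    by (simp add: det_mult[OF G] det_transpose[OF G] power2_eq_square)
  also have "\<dots> = prod_list (diag_mat (?G * transpose_mat ?G))"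
    by (rule det_upper_triangular[OF _ GG])
      (use entry gs_orthogonal in \<open>auto simp: upper_triangular_def basis_mat_def\<close>)
  also have "\<dots> = (\<Prod>i<r. ip r (gs r b i) (gs r b i))"
    unfolding prod_list_diag_prod lessThan_atLeast0 using GG entry by (intro prod.cong) auto
  finally show ?thesis .
qed

lemma in_lattice_int_mat:
  assumes "\<forall>i<r. in_lattice r b (b' i)"
  obtains V :: "int mat" where "V \<in> carrier_mat r r" "basis_mat r b' = map_mat of_int V * basis_mat r b"
proof -
  obtain c where c: "\<forall>i<r. \<forall>k<r. b' i k = (\<Sum>j<r. of_int (c i j) * b j k)"
    using assms unfolding in_lattice_def by metis
  let ?V = "mat r r (\<lambda>(i, j). c i j)"
  have "basis_mat r b' = map_mat of_int ?V * basis_mat r b"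
    using c by (auto simp: basis_mat_def scalar_prod_def atLeast0LessThan intro!: eq_matI)
  then show ?thesis
    using that[of ?V] by simp
qed

text \<open>Two bases of one lattice differ by integer matrices in both directions, so the
  determinant of either is an integer multiple of the other's.\<close>
lemma same_lattice_abs_det_le:
  assumes "same_lattice r b b'"
  shows "\<bar>det (basis_mat r b')\<bar> \<le> \<bar>det (basis_mat r b)\<bar>"
proof -
  obtain U :: "int mat" where U: "U \<in> carrier_mat r r" "basis_mat r b' = map_mat of_int U * basis_mat r b"
    using assms unfolding same_lattice_def by (metis in_lattice_int_mat)
  obtain V :: "int mat" where V: "V \<in> carrier_mat r r" "basis_mat r b = map_mat of_int V * basis_mat r b'"
    using assms unfolding same_lattice_def by (metis in_lattice_int_mat)
  have dU: "det (basis_mat r b') = of_int (det U) * det (basis_mat r b)"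
    using U by (simp add: det_mult[of _ r] of_int_hom.hom_det)
  have dV: "det (basis_mat r b) = of_int (det V) * det (basis_mat r b')"
    using V by (simp add: det_mult[of _ r] of_int_hom.hom_det)
  show ?thesis
  proof (cases "det V = 0")
    case True
    then show ?thesis using dU dV by simp
  next
    case False
    then have "1 \<le> \<bar>real_of_int (det V)\<bar>"
      by linarith
    then show ?thesis
      by (simp add: dV abs_mult mult_le_cancel_right1)
  qed
qed

lemma det_basis_mat_scale_cols:
  assumes "\<And>i l. i < r \<Longrightarrow> l < r \<Longrightarrow> c i l = b i l * d l"
  shows "det (basis_mat r c) = det (basis_mat r b) * (\<Prod>l<r. d l)"
proof -
  have "basis_mat r c = basis_mat r b * mat_diag r d"
    using assms by (auto simp: mat_diag_mult_right[of _ r] basis_mat_def intro!: eq_matI)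
  moreover have "det (mat_diag r d) = (\<Prod>l<r. d l)"
    by (subst det_upper_triangular[of _ r])
      (auto simp: upper_triangular_def mat_diag_def prod_list_diag_prod lessThan_atLeast0)
  ultimately show ?thesis
    by (simp add: det_mult[of _ r])
qed

lemma reduced_first_sq_norm_le_det:
  assumes "reduced r b" "0 < r"
  shows "ip r (b 0) (b 0) \<le> 2 powr ((real r - 1) / 2) * \<bar>det (basis_mat r b)\<bar> powr (2 / real r)"
proof -
  let ?D = "\<bar>det (basis_mat r b)\<bar>"
  obtain s where s: "r = Suc s"
    using assms(2) gr0_implies_Suc by blast
  have "2 * (\<Sum>i<r. real i) = real r * (real r - 1)"
    using double_gauss_sum[of s, where 'a = real] by (simp add: s lessThan_Suc_atMost atLeast0AtMost)
  then have gauss: "(\<Sum>i<r. real i) = real r * (real r - 1) / 2"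
    by linarith
  have "(2 powr ((real r - 1) / 2))^r = 2 powr (real r * ((real r - 1) / 2))"
    by (rule powr_power) simp
  also have "\<dots> = 2 powr (\<Sum>i<r. real i)"
    unfolding gauss by simp
  also have "\<dots> = 2^(\<Sum>i<r. i)"
    using powr_realpow[of 2 "\<Sum>i<r. i"] by simp
  finally have "(2 powr ((real r - 1) / 2))^r = 2^(\<Sum>i<r. i)" .
  moreover have "(?D powr (2 / real r))^r = ?D\<^sup>2"
    using assms(2) by (cases "?D = 0") (simp_all add: powr_power)
  ultimately have "(2 powr ((real r - 1) / 2) * ?D powr (2 / real r))^r = 2^(\<Sum>i<r. i) * (det (basis_mat r b))\<^sup>2"
    by (simp add: power_mult_distrib)
  also have "\<dots> \<ge> (ip r (b 0) (b 0))^r"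
    using reduced_first_sq_norm_pow_le[OF assms(1)] by (simp add: det_basis_mat_sq)
  finally show ?thesis
    unfolding s by (rule power_le_imp_le_base) simp
qed

lemma dist_int_le_abs_diff: "dist_int x \<le> \<bar>x - of_int p\<bar>"
proof (cases "of_int p \<le> x")
  case True
  then have "p \<le> \<lfloor>x\<rfloor>"
    by (simp add: le_floor_iff)
  then show ?thesis
    using True unfolding dist_int_def by linarith
next
  case False
  then have "\<lceil>x\<rceil> \<le> p"
    by (simp add: ceiling_le_iff)
  then show ?thesis
    using False unfolding dist_int_def by linarith
qed

lemma prod_lessThan_if_less: "(\<Prod>i<m + n. if i < n then 1 else x) = x ^ m"
  by (induction m) (auto simp: mult.commute)

lemma ILLL_c_pos: "0 < ILLL_c m n k"
  by (simp add: ILLL_c_def)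

lemma ILLL_c_Suc: "ILLL_c m n (Suc k) = ILLL_c m n k / 2 powr ((real m + real n) / real m)"
  unfolding ILLL_c_def powr_powr by (simp add: powr_diff[symmetric] algebra_simps)

lemma ILLL_c_power:
  assumes "1 \<le> m"
  shows "ILLL_c m n k ^ m = 2 powr ((real m + real n) * (- (real m + real n + 3) / 4 - real k + 1))"
proof -
  have "real m * ((- (real m + real n + 3) / 4 - real k + 1) * ((real m + real n) / real m))
      = (real m + real n) * (- (real m + real n + 3) / 4 - real k + 1)"
    using assms by (simp add: field_simps)
  then show ?thesis
    unfolding ILLL_c_def powr_powr by (simp add: powr_power)
qed

lemma det_ILLL_B0: "det (basis_mat (m + n) (ILLL_B0 m n A)) = ILLL_c m n 1 ^ m"
proof -
  have "det (basis_mat (m + n) (ILLL_B0 m n A)) = prod_list (diag_mat (basis_mat (m + n) (ILLL_B0 m n A)))"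
    by (rule det_lower_triangular[of "m + n"]) (auto simp: basis_mat_def ILLL_B0_def)
  also have "\<dots> = (\<Prod>i<m + n. if i < n then 1 else ILLL_c m n 1)"
    unfolding prod_list_diag_prod lessThan_atLeast0
    by (intro prod.cong) (auto simp: basis_mat_def ILLL_B0_def)
  finally show ?thesis
    by (simp add: prod_lessThan_if_less)
qed

lemma ILLL_run_init:
  "ILLL_run m n A qmax C R q p \<Longrightarrow> basis_mat (m + n) (C 1) = basis_mat (m + n) (ILLL_B0 m n A)"
  unfolding ILLL_run_def Let_def by (intro basis_mat_cong) blast

lemma ILLL_run_iteration:
  assumes "ILLL_run m n A qmax C R q p" "1 \<le> k" "int k \<le> ILLL_kmax m n qmax"
  shows "LLL_output (m + n) (C k) (R k)"
    and "\<forall>i<n. R k 0 i = (\<Sum>j<m. of_int (q k j) * A i j) - of_int (p k i)"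
    and "\<forall>j<m. R k 0 (n + j) = ILLL_c m n k * of_int (q k j)"
    and "\<forall>i<m + n. \<forall>l<m + n. C (Suc k) i l =
           (if l < n then R k i l else R k i l / 2 powr ((real m + real n) / real m))"
  using assms unfolding ILLL_run_def Let_def by auto

lemma ILLL_run_abs_det_le:
  assumes run: "ILLL_run m n A qmax C R q p" and "1 \<le> k" "int k \<le> ILLL_kmax m n qmax"
  shows "\<bar>det (basis_mat (m + n) (C k))\<bar> \<le> ILLL_c m n k ^ m"
  using assms(2,3)
proof (induction k rule: nat_induct_at_least)
  case base
  then show ?case
    using ILLL_run_init[OF run] det_ILLL_B0[of m n A] ILLL_c_pos[of m n 1] by simp
next
  case (Suc k)
  let ?s = "2 powr ((real m + real n) / real m)"
  have k: "int k \<le> ILLL_kmax m n qmax"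
    using Suc.prems by simp
  have "det (basis_mat (m + n) (C (Suc k)))
      = det (basis_mat (m + n) (R k)) * (\<Prod>l<m + n. if l < n then 1 else 1 / ?s)"
    using ILLL_run_iteration(4)[OF run Suc.hyps k] by (intro det_basis_mat_scale_cols) auto
  then have "\<bar>det (basis_mat (m + n) (C (Suc k)))\<bar> = \<bar>det (basis_mat (m + n) (R k))\<bar> * (1 / ?s) ^ m"
    by (simp add: prod_lessThan_if_less abs_mult)
  also have "\<dots> \<le> ILLL_c m n k ^ m * (1 / ?s) ^ m"
    using same_lattice_abs_det_le ILLL_run_iteration(1)[OF run Suc.hyps k] Suc.IH[OF k]
    unfolding LLL_output_def by (intro mult_right_mono) force+
  also have "\<dots> = ILLL_c m n (Suc k) ^ m"
    by (simp add: ILLL_c_Suc power_divide)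
  finally show ?case .
qed

lemma ILLL_run_first_sq_norm_le:
  assumes "1 \<le> m" and run: "ILLL_run m n A qmax C R q p"
    and k: "1 \<le> k" "int k \<le> ILLL_kmax m n qmax"
  shows "ip (m + n) (R k 0) (R k 0) \<le> (2 powr (- real k))\<^sup>2"
proof -
  let ?r = "m + n" and ?D = "\<bar>det (basis_mat (m + n) (R k))\<bar>"
  have lll: "reduced ?r (R k)" "same_lattice ?r (C k) (R k)"
    using ILLL_run_iteration(1)[OF run k] unfolding LLL_output_def by auto
  have r: "real ?r \<noteq> 0"
    using assms(1) by simp
  have "ip ?r (R k 0) (R k 0) \<le> 2 powr ((real ?r - 1) / 2) * ?D powr (2 / real ?r)"
    using reduced_first_sq_norm_le_det[OF lll(1)] assms(1) by simp
  also have "\<dots> \<le> 2 powr ((real ?r - 1) / 2) * (ILLL_c m n k ^ m) powr (2 / real ?r)"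
    using same_lattice_abs_det_le[OF lll(2)] ILLL_run_abs_det_le[OF run k]
    by (intro mult_left_mono powr_mono2) auto
  also have "\<dots> = 2 powr ((real ?r - 1) / 2 + (real ?r * (- (real ?r + 3) / 4 - real k + 1)) * (2 / real ?r))"
    using assms(1) by (simp add: ILLL_c_power powr_powr powr_add)
  also have "(real ?r - 1) / 2 + (real ?r * (- (real ?r + 3) / 4 - real k + 1)) * (2 / real ?r) = 2 * - real k"
    using r by (simp add: field_simps)
  also have "2 powr (2 * - real k) = (2 powr (- real k))\<^sup>2"
    by (simp add: powr_power)
  finally show ?thesis .
qed

lemma ILLL_run_output_le:
  assumes "1 \<le> m" and run: "ILLL_run m n A qmax C R q p"
    and k: "1 \<le> k" "int k \<le> ILLL_kmax m n qmax"
  shows "j < m \<Longrightarrow> ILLL_c m n k * \<bar>real_of_int (q k j)\<bar> \<le> 2 powr (- real k)"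
    and "i < n \<Longrightarrow> dist_int (\<Sum>j<m. of_int (q k j) * A i j) \<le> 2 powr (- real k)"
proof -
  have coord: "\<bar>R k 0 l\<bar> \<le> 2 powr (- real k)" if "l < m + n" for l
  proof -
    have "\<bar>R k 0 l\<bar>\<^sup>2 \<le> (2 powr (- real k))\<^sup>2"
      using order_trans[OF sq_le_ip_self[OF that, where x = "R k 0"] ILLL_run_first_sq_norm_le[OF assms]]
      by simp
    then show ?thesis
      by (rule power2_le_imp_le) simp
  qed
  show "ILLL_c m n k * \<bar>real_of_int (q k j)\<bar> \<le> 2 powr (- real k)" if "j < m"
    using coord[of "n + j"] ILLL_run_iteration(3)[OF run k] ILLL_c_pos[of m n k] that
    by (simp add: abs_mult)
  show "dist_int (\<Sum>j<m. of_int (q k j) * A i j) \<le> 2 powr (- real k)" if "i < n"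
  proof -
    have "dist_int (\<Sum>j<m. of_int (q k j) * A i j) \<le> \<bar>(\<Sum>j<m. of_int (q k j) * A i j) - of_int (p k i)\<bar>"
      by (rule dist_int_le_abs_diff)
    also have "\<dots> = \<bar>R k 0 i\<bar>"
      using ILLL_run_iteration(2)[OF run k] that by simp
    also have "\<dots> \<le> 2 powr (- real k)"
      using coord[of i] that by simp
    finally show ?thesis .
  qed
qed

text \<open>Take k = \<lfloor>t\<rfloor>, where t solves 2 powr (- t) = c(t) * Q for c extended to real
  arguments; t \<ge> 1 amounts to the lower bound on Q.\<close>
lemma ILLL_index_exists:
  assumes "1 \<le> m" "1 \<le> n"
    and Q: "2 powr ((real m + real n + 3) * (real m + real n) / (4 * real m)) \<le> Q" "Q \<le> qmax"
  obtains k :: nat where "1 \<le> k" "int k \<le> ILLL_kmax m n qmax"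
    and "2 powr (- real k) \<le> ILLL_c m n k * Q"
    and "2 powr (- real k) \<le> 2 powr ((real m + real n + 3) * (real m + real n) / (4 * real n))
                              * Q powr (- real m / real n)"
proof -
  have mn: "0 < real m" "0 < real n"
    using assms(1,2) by auto
  have "0 < Q"
    using Q(1) by (rule order_less_le_trans[rotated]) simp
  define L where "L = log 2 Q"
  have Q_eq: "Q = 2 powr L"
    using \<open>0 < Q\<close> by (simp add: L_def)
  have L_lower: "(real m + real n + 3) * (real m + real n) / (4 * real m) \<le> L"
    using Q(1) \<open>0 < Q\<close> unfolding L_def by (simp add: le_log_iff)
  have L_upper: "L \<le> log 2 qmax"
    using Q \<open>0 < Q\<close> unfolding L_def by simp
  define t where "t = (real m * L - (real m + real n - 1) * (real m + real n) / 4) / real n"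
  have "real n \<le> real m * L - (real m + real n - 1) * (real m + real n) / 4"
    using L_lower mn by (simp add: pos_divide_le_eq field_simps)
  then have "1 \<le> t"
    using mn by (simp add: t_def)
  define k where "k = nat \<lfloor>t\<rfloor>"
  have k: "real k \<le> t" "t < real k + 1" "1 \<le> k"
    using \<open>1 \<le> t\<close> unfolding k_def by linarith+
  have "t \<le> - ((real m + real n - 1) * (real m + real n)) / (4 * real n) + real m * log 2 qmax / real n"
    using L_upper mn unfolding t_def by (simp add: divide_right_mono field_simps)
  then have "int k \<le> ILLL_kmax m n qmax"
    using k(1) unfolding ILLL_kmax_def by linarith
  moreover have "2 powr (- real k) \<le> ILLL_c m n k * Q"
  proof -
    have "0 \<le> real m * L - (real m + real n - 1) * (real m + real n) / 4 - real n * real k"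
      using mult_left_mono[OF k(1), of "real n"] mn by (simp add: t_def)
    moreover have "(- (real m + real n + 3) / 4 - real k + 1) * ((real m + real n) / real m) + L
        = (real m * L - (real m + real n - 1) * (real m + real n) / 4 - real n * real k) / real m - real k"
      using mn by (simp add: field_simps)
    ultimately have "- real k \<le> (- (real m + real n + 3) / 4 - real k + 1) * ((real m + real n) / real m) + L"
      using mn by simp
    then show ?thesis
      unfolding Q_eq ILLL_c_def powr_powr by (simp add: powr_add[symmetric])
  qed
  moreover have "2 powr (- real k) \<le> 2 powr ((real m + real n + 3) * (real m + real n) / (4 * real n))
                                     * Q powr (- real m / real n)"
  proof -
    have "(real m + real n + 3) * (real m + real n) / (4 * real n) + L * (- real m / real n)
        = (real m + real n) / real n - t"
      using mn by (simp add: t_def field_simps)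
    moreover have "1 \<le> (real m + real n) / real n"
      using mn by simp
    ultimately have "- real k \<le> (real m + real n + 3) * (real m + real n) / (4 * real n) + L * (- real m / real n)"
      using k(2) by linarith
    then show ?thesis
      unfolding Q_eq powr_powr by (simp add: powr_add[symmetric])
  qed
  ultimately show ?thesis
    using that k(3) by blast
qed

theorem theorem2:
  fixes m n :: nat and A :: "nat \<Rightarrow> nat \<Rightarrow> real" and qmax :: real
    and C R :: "nat \<Rightarrow> nat \<Rightarrow> nat \<Rightarrow> real" and q p :: "nat \<Rightarrow> nat \<Rightarrow> int"
  assumes "m \<ge> 1" and "n \<ge> 1" and "qmax > 1"
    and "ILLL_run m n A qmax C R q p"
  shows "\<forall>Q::real.
           2 powr ((real m + real n + 3) * (real m + real n) / (4 * real m)) \<le> Q \<and> Q \<le> qmax \<longrightarrow>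
           (\<exists>k::nat. 1 \<le> k \<and> int k \<le> ILLL_kmax m n qmax \<and>
              (\<forall>j<m. \<bar>real_of_int (q k j)\<bar> \<le> Q) \<and>
              (\<forall>i<n. dist_int (\<Sum>j<m. of_int (q k j) * A i j)
                 \<le> 2 powr ((real m + real n + 3) * (real m + real n) / (4 * real n))
                   * Q powr (- real m / real n)))"
proof (intro allI impI)
  fix Q :: real
  assume "2 powr ((real m + real n + 3) * (real m + real n) / (4 * real m)) \<le> Q \<and> Q \<le> qmax"
  then obtain k where k: "1 \<le> k" "int k \<le> ILLL_kmax m n qmax"
    and q_bound: "2 powr (- real k) \<le> ILLL_c m n k * Q"
    and dist_bound: "2 powr (- real k) \<le> 2 powr ((real m + real n + 3) * (real m + real n) / (4 * real n))
                                          * Q powr (- real m / real n)"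
    using ILLL_index_exists assms(1,2) by blast
  note output_le = ILLL_run_output_le[OF assms(1,4) k]
  show "\<exists>k::nat. 1 \<le> k \<and> int k \<le> ILLL_kmax m n qmax \<and>
          (\<forall>j<m. \<bar>real_of_int (q k j)\<bar> \<le> Q) \<and>
          (\<forall>i<n. dist_int (\<Sum>j<m. of_int (q k j) * A i j)
             \<le> 2 powr ((real m + real n + 3) * (real m + real n) / (4 * real n))
               * Q powr (- real m / real n))"
  proof (intro exI[of _ k] conjI allI impI k)
    fix j
    assume "j < m"
    then show "\<bar>real_of_int (q k j)\<bar> \<le> Q"
      using order_trans[OF output_le(1) q_bound] ILLL_c_pos[of m n k] by simp
  next
    fix i
    assume "i < n"
    then show "dist_int (\<Sum>j<m. of_int (q k j) * A i j)
        \<le> 2 powr ((real m + real n + 3) * (real m + real n) / (4 * real n)) * Q powr (- real m / real n)"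
      using order_trans[OF output_le(2) dist_bound] by blast
  qed
qed

end
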